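(* Let $\alpha\in[0,1)$, let $G\in\mathcal{G}_n^m$ with strong component $G^*$ and hanging trees $T^{(1)},\dots,T^{(m)}$ ($|\mathcal{V}(T^{(i)})|=n_i$), and let $G'$ be the digraph obtained from $G$ by replacing, for each $i$, the arcs of $T^{(i)}$ by the arcs $(v_i,u)$ for all $u\in\mathcal{V}(T^{(i)})\setminus\{v_i\}$ (so each $T^{(i)}$ becomes an out-star on the same vertex set centred at $v_i$). Then $\rho_\alpha(G')\ge\rho_\alpha(G)$.
   Context: All digraphs are finite, without loops or multiple arcs. $A(G)$ is the adjacency matrix, $D^+(G)$ the diagonal matrix of outdegrees, $A_\alpha(G)=\alpha D^+(G)+(1-\alpha)A(G)$, and $\rho_\alpha(G)$ is the spectral radius (largest modulus of an eigenvalue) of $A_\alpha(G)$. A directed tree is a digraph whose underlying graph is a tree (a single vertex allowed). The class $\mathcal{G}_n^m$ ($2\le m\le n$): $G\in\mathcal{G}_n^m$ consists of a strongly connected digraph $G^*$ on $m$ vertices $v_1,\dots,v_m$ together with directed trees $T^{(1)},\dots,T^{(m)}$, where $T^{(i)}$ has $n_i\ge1$ vertices including $v_i$, the sets $\mathcal{V}(T^{(i)})$ are pairwise disjoint, $\mathcal{V}(T^{(i)})\cap\mathcal{V}(G^* )=\{v_i\}$, $n=\sum_i n_i$, and the arcs of $G$ are those of $G^*$ and of the $T^{(i)}$. The vertices of $G^*$ are labeled so that $d_{G^*}^+(v_1)\ge d_{G^*}^+(v_2)\ge\cdots\ge d_{G^*}^+(v_m)$. *)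

theory Defs
  imports Complex_Main
begin

definition digraph :: "'a set \<Rightarrow> ('a \<times> 'a) set \<Rightarrow> bool" where
  "digraph V E \<longleftrightarrow> finite V \<and> E \<subseteq> V \<times> V \<and> (\<forall>v. (v, v) \<notin> E)"

definition outdeg :: "('a \<times> 'a) set \<Rightarrow> 'a \<Rightarrow> nat" where
  "outdeg E v = card {u. (v, u) \<in> E}"

definition strongly_connected :: "'a set \<Rightarrow> ('a \<times> 'a) set \<Rightarrow> bool" where
  "strongly_connected V E \<longleftrightarrow> digraph V E \<and> (\<forall>u\<in>V. \<forall>w\<in>V. (u, w) \<in> E\<^sup>*)"

text \<open>Directed tree: the underlying (multi)graph is a tree, i.e. it is connected, has
  |V|-1 edges and no pair of opposite arcs (which would give a double edge).\<close>
definition directed_tree :: "'a set \<Rightarrow> ('a \<times> 'a) set \<Rightarrow> bool" where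
  "directed_tree V E \<longleftrightarrow> digraph V E \<and> V \<noteq> {}
     \<and> (\<forall>u v. (u, v) \<in> E \<longrightarrow> (v, u) \<notin> E)
     \<and> (\<forall>u\<in>V. \<forall>w\<in>V. (u, w) \<in> (E \<union> E\<inverse>)\<^sup>*)
     \<and> card E = card V - 1"

definition A_alpha :: "real \<Rightarrow> ('a \<times> 'a) set \<Rightarrow> 'a \<Rightarrow> 'a \<Rightarrow> real" where
  "A_alpha \<alpha> E v w = (if v = w then \<alpha> * real (outdeg E v) else 0)
                    + (1 - \<alpha>) * (if (v, w) \<in> E then 1 else 0)"

definition is_eigenvalue :: "'a set \<Rightarrow> ('a \<Rightarrow> 'a \<Rightarrow> real) \<Rightarrow> complex \<Rightarrow> bool" where
  "is_eigenvalue V M mu \<longleftrightarrow> (\<exists>x :: 'a \<Rightarrow> complex. (\<exists>v\<in>V. x v \<noteq> 0) \<and>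
      (\<forall>v\<in>V. (\<Sum>w\<in>V. complex_of_real (M v w) * x w) = mu * x v))"

definition spectral_radius :: "'a set \<Rightarrow> ('a \<Rightarrow> 'a \<Rightarrow> real) \<Rightarrow> real" where
  "spectral_radius V M = Max {cmod mu | mu. is_eigenvalue V M mu}"

definition rho_alpha :: "real \<Rightarrow> 'a set \<Rightarrow> ('a \<times> 'a) set \<Rightarrow> real" where
  "rho_alpha \<alpha> V E = spectral_radius V (A_alpha \<alpha> E)"

text \<open>Membership in the class G_n^m: strong component (Vs, Es) with m = card Vs \<ge> 2 vertices;
  for each c \<in> Vs a hanging directed tree (T c, F c) containing c.\<close>
definition in_class_G ::
  "'a set \<Rightarrow> ('a \<times> 'a) set \<Rightarrow> 'a set \<Rightarrow> ('a \<times> 'a) set \<Rightarrow> ('a \<Rightarrow> 'a set) \<Rightarrow> ('a \<Rightarrow> ('a \<times> 'a) set) \<Rightarrow> bool"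
  where
  "in_class_G V E Vs Es T F \<longleftrightarrow>
     strongly_connected Vs Es \<and> card Vs \<ge> 2
     \<and> (\<forall>c\<in>Vs. c \<in> T c \<and> directed_tree (T c) (F c) \<and> T c \<inter> Vs = {c})
     \<and> (\<forall>c\<in>Vs. \<forall>d\<in>Vs. c \<noteq> d \<longrightarrow> T c \<inter> T d = {})
     \<and> V = (\<Union>c\<in>Vs. T c)
     \<and> E = Es \<union> (\<Union>c\<in>Vs. F c)"

definition star_replace :: "'a set \<Rightarrow> ('a \<times> 'a) set \<Rightarrow> ('a \<Rightarrow> 'a set) \<Rightarrow> ('a \<times> 'a) set" where
  "star_replace Vs Es T = Es \<union> (\<Union>c\<in>Vs. {(c, u) | u. u \<in> T c - {c}})"

end

theory Submission
  imports Defs "Jordan_Normal_Form.Spectral_Radius"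
begin

text \<open>Let \<mu> be an eigenvalue of A_alpha of G of maximal modulus, with eigenvector x. The tree
  vertices w outside the strong component form a triangular block of A_alpha with diagonal
  entries \<alpha> d(w), where d(w) \<le> n_i - 1 \<le> d'(v_i) for the outdegree d' in G' of the root
  v_i of the tree containing w. So either
  |\<mu>| \<le> \<alpha> d'(v_i), a diagonal entry of A_alpha of G', or \<mu> differs from all diagonal
  entries of the triangular block. In the second case x vanishes on every tree vertex reachable
  from the strong component, hence |x| restricted to the strong component is a nonzero
  subinvariant vector of A_alpha of G', and the Collatz--Wielandt bound gives
  |\<mu>| \<le> \<rho>_alpha(G').\<close>

section \<open>Spectral radius and subinvariant vectors\<close>

definition enum_mat :: "nat \<Rightarrow> (nat \<Rightarrow> 'a) \<Rightarrow> ('a \<Rightarrow> 'a \<Rightarrow> real) \<Rightarrow> complex mat" where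
  "enum_mat n f B = mat n n (\<lambda>(i, j). complex_of_real (B (f i) (f j)))"

lemma sum_bij_enum:
  assumes "bij_betw f {0..<n::nat} V"
  shows "(\<Sum>w\<in>V. g w) = (\<Sum>j<n. g (f j))"
  using assms unfolding atLeast0LessThan by (rule sum.reindex_bij_betw[symmetric])

lemma enum_mat_mult_vec:
  assumes "i < n" "dim_vec v = n"
  shows "(enum_mat n f B *\<^sub>v v) $ i = (\<Sum>j<n. complex_of_real (B (f i) (f j)) * v $ j)"
  using assms by (simp add: enum_mat_def scalar_prod_def atLeast0LessThan)

lemma is_eigenvalue_iff_eigenvalue_enum_mat:
  assumes bij: "bij_betw f {0..<n} V"
  shows "is_eigenvalue V B \<mu> \<longleftrightarrow> eigenvalue (enum_mat n f B) \<mu>"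
proof
  assume "is_eigenvalue V B \<mu>"
  then obtain x v0 where v0: "v0 \<in> V" "x v0 \<noteq> 0"
    and eq: "\<And>v. v \<in> V \<Longrightarrow> (\<Sum>w\<in>V. complex_of_real (B v w) * x w) = \<mu> * x v"
    unfolding is_eigenvalue_def by blast
  define v where "v = vec n (\<lambda>i. x (f i))"
  obtain i0 where "i0 < n" "f i0 = v0" using bij v0 by (auto simp: bij_betw_def)
  then have "v \<noteq> 0\<^sub>v n" using v0 by (auto simp: v_def dest: arg_cong[of _ _ "\<lambda>u. u $ i0"])
  moreover have "enum_mat n f B *\<^sub>v v = \<mu> \<cdot>\<^sub>v v"
  proof (rule eq_vecI)
    fix i assume "i < dim_vec (\<mu> \<cdot>\<^sub>v v)"
    then have i: "i < n" by (simp add: v_def)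
    then have "f i \<in> V" using bij by (auto simp: bij_betw_def)
    then show "(enum_mat n f B *\<^sub>v v) $ i = (\<mu> \<cdot>\<^sub>v v) $ i"
      using i eq[of "f i"] sum_bij_enum[OF bij, of "\<lambda>w. complex_of_real (B (f i) w) * x w"]
      by (simp add: enum_mat_mult_vec v_def)
  qed (simp add: enum_mat_def v_def)
  ultimately show "eigenvalue (enum_mat n f B) \<mu>"
    unfolding eigenvalue_def eigenvector_def by (intro exI[of _ v]) (simp add: enum_mat_def v_def)
next
  assume "eigenvalue (enum_mat n f B) \<mu>"
  then obtain v where v: "v \<in> carrier_vec n" "v \<noteq> 0\<^sub>v n" "enum_mat n f B *\<^sub>v v = \<mu> \<cdot>\<^sub>v v"
    unfolding eigenvalue_def eigenvector_def by (auto simp: enum_mat_def)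
  define x where "x a = v $ inv_into {0..<n} f a" for a
  have xf: "x (f j) = v $ j" if "j < n" for j
    using bij that unfolding x_def bij_betw_def by (simp add: inv_into_f_f)
  obtain i0 where i0: "i0 < n" "v $ i0 \<noteq> 0"
    using v(1,2) by (metis carrier_vecD eq_vecI index_zero_vec(1,2))
  show "is_eigenvalue V B \<mu>" unfolding is_eigenvalue_def
  proof (intro exI[of _ x] conjI ballI)
    show "\<exists>a\<in>V. x a \<noteq> 0"
      using i0 bij xf[of i0] by (intro bexI[of _ "f i0"]) (auto simp: bij_betw_def)
  next
    fix a assume "a \<in> V"
    then obtain i where i: "i < n" "a = f i" using bij by (auto simp: bij_betw_def)
    have "(\<Sum>w\<in>V. complex_of_real (B a w) * x w) = (enum_mat n f B *\<^sub>v v) $ i"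
      using i v(1) sum_bij_enum[OF bij, of "\<lambda>w. complex_of_real (B a w) * x w"]
      by (simp add: enum_mat_mult_vec xf)
    then show "(\<Sum>w\<in>V. complex_of_real (B a w) * x w) = \<mu> * x a"
      using v i xf by simp
  qed
qed

lemma spectral_radius_eq_enum_mat:
  assumes "bij_betw f {0..<n} V"
  shows "Defs.spectral_radius V B = Spectral_Radius.spectral_radius (enum_mat n f B)"
proof -
  have "{cmod \<mu> | \<mu>. is_eigenvalue V B \<mu>} = norm ` spectrum (enum_mat n f B)"
    using is_eigenvalue_iff_eigenvalue_enum_mat[OF assms] by (auto simp: spectrum_def)
  then show ?thesis
    unfolding Defs.spectral_radius_def Spectral_Radius.spectral_radius_def by simp
qed

lemma spectral_radius_attained:
  assumes "finite V" "V \<noteq> {}"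
  obtains \<mu> where "is_eigenvalue V B \<mu>" "Defs.spectral_radius V B = cmod \<mu>"
proof -
  obtain f where bij: "bij_betw f {0..<card V} V" using ex_bij_betw_nat_finite[OF assms(1)] by blast
  have "card V > 0" using assms by (simp add: card_gt_0_iff)
  then have "Spectral_Radius.spectral_radius (enum_mat (card V) f B) \<in> norm ` spectrum (enum_mat (card V) f B)"
    by (intro spectral_radius_mem_max(1)[of _ "card V"]) (simp_all add: enum_mat_def)
  then show ?thesis
    using that is_eigenvalue_iff_eigenvalue_enum_mat[OF bij] spectral_radius_eq_enum_mat[OF bij]
    by (auto simp: spectrum_def)
qed

lemma norm_le_spectral_radius:
  assumes "finite V" "is_eigenvalue V B \<mu>"
  shows "cmod \<mu> \<le> Defs.spectral_radius V B"
proof -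
  obtain f where bij: "bij_betw f {0..<card V} V" using ex_bij_betw_nat_finite[OF assms(1)] by blast
  have "V \<noteq> {}" using assms(2) by (auto simp: is_eigenvalue_def)
  then have "card V > 0" using assms(1) by (simp add: card_gt_0_iff)
  then show ?thesis
    using assms(2) is_eigenvalue_iff_eigenvalue_enum_mat[OF bij] spectral_radius_eq_enum_mat[OF bij]
    by (auto simp: spectrum_def enum_mat_def intro!: spectral_radius_mem_max(2))
qed

lemma is_eigenvalue_scale:
  assumes "is_eigenvalue V (\<lambda>v w. c * B v w) \<mu>" "c \<noteq> 0"
  shows "is_eigenvalue V B (\<mu> / complex_of_real c)"
proof -
  obtain x where "\<exists>v\<in>V. x v \<noteq> 0"
    and eq: "\<forall>v\<in>V. (\<Sum>w\<in>V. complex_of_real (c * B v w) * x w) = \<mu> * x v"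
    using assms(1) unfolding is_eigenvalue_def by blast
  moreover have "(\<Sum>w\<in>V. complex_of_real (B v w) * x w) = \<mu> / complex_of_real c * x v" if "v \<in> V" for v
    using eq that assms(2) by (simp add: sum_distrib_left[symmetric] mult.assoc field_simps)
  ultimately show ?thesis unfolding is_eigenvalue_def by blast
qed

fun matpow :: "'a set \<Rightarrow> ('a \<Rightarrow> 'a \<Rightarrow> real) \<Rightarrow> nat \<Rightarrow> 'a \<Rightarrow> 'a \<Rightarrow> real" where
  "matpow V B 0 v w = (if v = w then 1 else 0)"
| "matpow V B (Suc k) v w = (\<Sum>u\<in>V. matpow V B k v u * B u w)"

lemma matpow_nonneg:
  assumes "\<And>u w. u \<in> V \<Longrightarrow> w \<in> V \<Longrightarrow> B u w \<ge> 0" "w \<in> V"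
  shows "matpow V B k v w \<ge> 0"
  using assms(2) by (induction k arbitrary: w) (auto intro!: sum_nonneg mult_nonneg_nonneg assms(1))

lemma matpow_scale:
  "matpow V (\<lambda>u w. B u w / s) k v w = matpow V B k v w / s ^ k"
  by (induction k arbitrary: w) (simp_all add: sum_divide_distrib mult.commute)

lemma enum_mat_pow_entry:
  assumes bij: "bij_betw f {0..<n} V" and "i < n" "j < n"
  shows "(enum_mat n f B ^\<^sub>m k) $$ (i, j) = complex_of_real (matpow V B k (f i) (f j))"
  using assms(3)
proof (induction k arbitrary: j)
  case 0
  have "f i = f j \<longleftrightarrow> i = j"
    using bij assms(2) 0 by (auto simp: bij_betw_def inj_on_def)
  then show ?case using assms(2) 0 by (simp add: enum_mat_def)
next
  case (Suc k)
  have car: "enum_mat n f B ^\<^sub>m k \<in> carrier_mat n n" by (simp add: enum_mat_def)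
  have "(enum_mat n f B ^\<^sub>m Suc k) $$ (i, j)
      = (\<Sum>l<n. complex_of_real (matpow V B k (f i) (f l)) * complex_of_real (B (f l) (f j)))"
    using car assms(2) Suc by (simp add: enum_mat_def scalar_prod_def atLeast0LessThan)
  also have "\<dots> = complex_of_real (matpow V B (Suc k) (f i) (f j))"
    using sum_bij_enum[OF bij, of "\<lambda>u. matpow V B k (f i) u * B u (f j)"] by simp
  finally show ?case .
qed

lemma spectral_radius_divide_less_one:
  assumes "finite V" "V \<noteq> {}" "0 < s" "Defs.spectral_radius V B < s"
  shows "Defs.spectral_radius V (\<lambda>v w. B v w / s) < 1"
proof -
  obtain \<kappa> where \<kappa>: "is_eigenvalue V (\<lambda>v w. B v w / s) \<kappa>"
    "Defs.spectral_radius V (\<lambda>v w. B v w / s) = cmod \<kappa>"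
    using spectral_radius_attained[OF assms(1,2)] by blast
  have "is_eigenvalue V B (complex_of_real s * \<kappa>)"
    using is_eigenvalue_scale[of V "1 / s" B \<kappa>] \<kappa>(1) assms(3) by (simp add: mult.commute)
  then have "cmod (complex_of_real s * \<kappa>) \<le> Defs.spectral_radius V B"
    by (rule norm_le_spectral_radius[OF assms(1)])
  then have "s * cmod \<kappa> \<le> Defs.spectral_radius V B"
    using assms(3) by (simp add: norm_mult)
  then have "s * cmod \<kappa> < s * 1"
    using assms(4) by simp
  then show ?thesis
    using \<kappa>(2) assms(3) by (simp only: mult_less_cancel_left_pos)
qed

lemma matpow_growth_bound:
  assumes "finite V" "0 < s" "Defs.spectral_radius V B < s"
  obtains c where "\<And>k v w. v \<in> V \<Longrightarrow> w \<in> V \<Longrightarrow> \<bar>matpow V B k v w\<bar> \<le> c * s ^ k"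
proof (cases "V = {}")
  case False
  define B' where "B' = (\<lambda>v w. B v w / s)"
  obtain f where bij: "bij_betw f {0..<card V} V" using ex_bij_betw_nat_finite[OF assms(1)] by blast
  have sr: "Spectral_Radius.spectral_radius (enum_mat (card V) f B') < 1"
    using spectral_radius_divide_less_one[OF assms(1) False assms(2,3)]
      spectral_radius_eq_enum_mat[OF bij] by (simp add: B'_def)
  obtain c where c: "\<And>k. norm_bound (enum_mat (card V) f B' ^\<^sub>m k) c"
    using spectral_radius_jnf_norm_bound_less_1_upper_triangular[OF _ sr, of "card V"]
    by (auto simp: enum_mat_def)
  show ?thesis
  proof (rule that)
    fix k v w assume "v \<in> V" "w \<in> V"
    obtain i where "i < card V" "v = f i" using bij \<open>v \<in> V\<close> by (force simp: bij_betw_def)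
    moreover obtain j where "j < card V" "w = f j" using bij \<open>w \<in> V\<close> by (force simp: bij_betw_def)
    ultimately have ij: "i < card V" "j < card V" "v = f i" "w = f j" by auto
    have "norm ((enum_mat (card V) f B' ^\<^sub>m k) $$ (i, j)) \<le> c"
      using c[of k] ij by (auto simp: norm_bound_def enum_mat_def)
    then have "\<bar>matpow V B k v w\<bar> / s ^ k \<le> c"
      using enum_mat_pow_entry[OF bij ij(1,2)] ij assms(2)
      by (simp add: B'_def matpow_scale norm_divide norm_power)
    then show "\<bar>matpow V B k v w\<bar> \<le> c * s ^ k"
      using assms(2) by (simp add: divide_le_eq)
  qed
qed simp

lemma matpow_subinvariant:
  assumes "\<And>u w. u \<in> V \<Longrightarrow> w \<in> V \<Longrightarrow> B u w \<ge> 0" "r \<ge> 0"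
    and sub: "\<And>u. u \<in> V \<Longrightarrow> r * z u \<le> (\<Sum>w\<in>V. B u w * z w)"
    and "finite V" "v \<in> V"
  shows "r ^ k * z v \<le> (\<Sum>w\<in>V. matpow V B k v w * z w)"
proof (induction k)
  case 0
  have "(\<Sum>w\<in>V. matpow V B 0 v w * z w) = (\<Sum>w\<in>V. if v = w then z w else 0)"
    by (rule sum.cong) auto
  then show ?case using assms(4,5) by simp
next
  case (Suc k)
  have "r ^ Suc k * z v \<le> r * (\<Sum>u\<in>V. matpow V B k v u * z u)"
    using mult_left_mono[OF Suc assms(2)] by (simp add: mult.assoc)
  also have "\<dots> = (\<Sum>u\<in>V. matpow V B k v u * (r * z u))"
    by (simp add: sum_distrib_left algebra_simps)
  also have "\<dots> \<le> (\<Sum>u\<in>V. matpow V B k v u * (\<Sum>w\<in>V. B u w * z w))"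
    by (intro sum_mono mult_left_mono sub matpow_nonneg assms(1))
  also have "\<dots> = (\<Sum>u\<in>V. \<Sum>w\<in>V. matpow V B k v u * B u w * z w)"
    by (simp add: sum_distrib_left mult.assoc)
  also have "\<dots> = (\<Sum>w\<in>V. matpow V B (Suc k) v w * z w)"
    by (subst sum.swap) (simp add: sum_distrib_right)
  finally show ?case .
qed

text \<open>Collatz--Wielandt bound. If r exceeded the spectral radius, the powers of B would grow like
  r^k along the support of z while being bounded by s^k for some s < r.\<close>

lemma spectral_radius_ge_subinvariant:
  assumes fin: "finite V" and v0: "v0 \<in> V" "z v0 > 0"
    and B: "\<And>v w. v \<in> V \<Longrightarrow> w \<in> V \<Longrightarrow> B v w \<ge> 0"
    and z: "\<And>v. v \<in> V \<Longrightarrow> z v \<ge> 0"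
    and sub: "\<And>v. v \<in> V \<Longrightarrow> r * z v \<le> (\<Sum>w\<in>V. B v w * z w)"
  shows "r \<le> Defs.spectral_radius V B"
proof (rule ccontr)
  assume "\<not> r \<le> Defs.spectral_radius V B"
  moreover obtain \<mu> where "Defs.spectral_radius V B = cmod \<mu>"
    using spectral_radius_attained[OF fin] v0 by blast
  ultimately obtain s where s: "0 < s" "Defs.spectral_radius V B < s" "s < r"
    by (metis dense norm_ge_zero le_less_trans not_le)
  obtain c where c: "\<And>k w. w \<in> V \<Longrightarrow> \<bar>matpow V B k v0 w\<bar> \<le> c * s ^ k"
    using matpow_growth_bound[OF fin s(1,2)] v0(1) by metis
  define Z where "Z = (\<Sum>w\<in>V. z w)"
  have "r ^ k * z v0 \<le> c * Z * s ^ k" for k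
  proof -
    have "r ^ k * z v0 \<le> (\<Sum>w\<in>V. matpow V B k v0 w * z w)"
      using matpow_subinvariant[OF B _ sub fin v0(1)] s by simp
    also have "\<dots> \<le> (\<Sum>w\<in>V. c * s ^ k * z w)"
      using c z by (intro sum_mono mult_right_mono) (auto dest: abs_le_D1)
    finally show ?thesis by (simp add: Z_def sum_distrib_left mult_ac)
  qed
  then have bounded: "(r / s) ^ k * z v0 \<le> c * Z" for k
    using s(1) by (simp add: power_divide field_simps)
  obtain k where "c * Z / z v0 < (r / s) ^ k"
    using real_arch_pow[of "r / s"] s by auto
  then have "c * Z < (r / s) ^ k * z v0" using v0(2) by (simp add: divide_less_eq)
  with bounded[of k] show False by linarith
qed

lemma diagonal_le_spectral_radius:
  assumes "finite V" "c \<in> V" "\<And>v w. v \<in> V \<Longrightarrow> w \<in> V \<Longrightarrow> B v w \<ge> 0"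
  shows "B c c \<le> Defs.spectral_radius V B"
proof (rule spectral_radius_ge_subinvariant[where z = "\<lambda>v. if v = c then 1 else 0"])
  fix v assume "v \<in> V"
  have "(\<Sum>w\<in>V. B v w * (if w = c then 1 else 0)) = (\<Sum>w\<in>V. if w = c then B v c else 0)"
    by (rule sum.cong) auto
  then show "B c c * (if v = c then 1 else 0) \<le> (\<Sum>w\<in>V. B v w * (if w = c then 1 else 0))"
    using assms \<open>v \<in> V\<close> by simp
qed (use assms in auto)

lemma A_alpha_nonneg:
  assumes "0 \<le> \<alpha>" "\<alpha> \<le> 1"
  shows "A_alpha \<alpha> E v w \<ge> 0"
  using assms by (simp add: A_alpha_def)

lemma A_alpha_diag:
  assumes "(v, v) \<notin> E"
  shows "A_alpha \<alpha> E v v = \<alpha> * real (outdeg E v)"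
  using assms by (simp add: A_alpha_def)

lemma A_alpha_offdiag:
  assumes "v \<noteq> w"
  shows "A_alpha \<alpha> E v w = (if (v, w) \<in> E then 1 - \<alpha> else 0)"
  using assms by (simp add: A_alpha_def)

lemma A_alpha_mono:
  assumes "0 \<le> \<alpha>" "\<alpha> \<le> 1" "outdeg E v \<le> outdeg E' v" "(v, w) \<in> E \<Longrightarrow> (v, w) \<in> E'"
  shows "A_alpha \<alpha> E v w \<le> A_alpha \<alpha> E' v w"
proof -
  have "\<alpha> * real (outdeg E v) \<le> \<alpha> * real (outdeg E' v)"
    using assms(1,3) by (simp add: mult_left_mono)
  then show ?thesis using assms(2,4) by (auto simp: A_alpha_def)
qed

text \<open>Along an acyclic part of the support that the eigenvector x can only leave towards zeros
  of x, the eigenvalue equation at a vertex w reads \<mu> x w = M w w x w once x vanishes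
  at all successors of w, so x vanishes on the whole part by well-founded induction.\<close>

lemma eigenvector_vanishes_on_acyclic_part:
  fixes M :: "'a \<Rightarrow> 'a \<Rightarrow> real" and x :: "'a \<Rightarrow> complex"
  assumes fin: "finite V"
    and eig: "\<And>v. v \<in> V \<Longrightarrow> (\<Sum>w\<in>V. complex_of_real (M v w) * x w) = \<mu> * x v"
    and "S \<subseteq> V"
    and acyc: "acyclic {(w, u). w \<in> S \<and> u \<in> S \<and> w \<noteq> u \<and> M w u \<noteq> 0}"
    and exit: "\<And>w u. w \<in> S \<Longrightarrow> u \<in> V - S \<Longrightarrow> M w u \<noteq> 0 \<Longrightarrow> x u = 0"
    and diag: "\<And>w. w \<in> S \<Longrightarrow> \<mu> \<noteq> complex_of_real (M w w)"
  shows "\<forall>w\<in>S. x w = 0"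
proof -
  define R where "R = {(w, u). w \<in> S \<and> u \<in> S \<and> w \<noteq> u \<and> M w u \<noteq> 0}"
  have "finite R"
    by (rule finite_subset[of _ "V \<times> V"]) (use fin \<open>S \<subseteq> V\<close> in \<open>auto simp: R_def\<close>)
  then have "wf (R\<inverse>)"
    using acyc by (simp add: R_def finite_acyclic_wf_converse)
  then have "w \<in> S \<longrightarrow> x w = 0" for w
  proof (induction w rule: wf_induct_rule)
    case (less w)
    show ?case
    proof
      assume w: "w \<in> S"
      have "(\<Sum>u\<in>V. complex_of_real (M w u) * x u)
          = (\<Sum>u\<in>V. if u = w then complex_of_real (M w w) * x w else 0)"
      proof (rule sum.cong)
        fix u assume "u \<in> V"
        then have "x u = 0" if "u \<noteq> w" "M w u \<noteq> 0"
          using less[of u] exit[OF w, of u] that w by (cases "u \<in> S") (auto simp: R_def)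
        then show "complex_of_real (M w u) * x u = (if u = w then complex_of_real (M w w) * x w else 0)"
          by (cases "u = w") auto
      qed simp
      also have "\<dots> = complex_of_real (M w w) * x w"
        using fin w \<open>S \<subseteq> V\<close> by auto
      finally have "(\<Sum>u\<in>V. complex_of_real (M w u) * x u) = complex_of_real (M w w) * x w" .
      then have "(\<mu> - complex_of_real (M w w)) * x w = 0"
        using eig[of w] w \<open>S \<subseteq> V\<close> by (auto simp: algebra_simps)
      then show "x w = 0" using diag[OF w] by simp
    qed
  qed
  then show ?thesis by blast
qed

section \<open>Directed trees are acyclic\<close>

text \<open>A breadth-first parent map injects the non-root vertices into the arcs.\<close>

lemma connected_imp_card_le_Suc_card_arcs:
  assumes fin: "finite V" and r: "r \<in> V" and EV: "E \<subseteq> V \<times> V"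
    and conn: "\<And>w. w \<in> V \<Longrightarrow> (r, w) \<in> (E \<union> E\<inverse>)\<^sup>*"
  shows "card V \<le> card E + 1"
proof -
  define S where "S = E \<union> E\<inverse>"
  define d where "d v = (LEAST k. (r, v) \<in> S ^^ k)" for v
  have d: "(r, v) \<in> S ^^ d v" if "v \<in> V" for v
    using conn[OF that] unfolding d_def S_def by (metis LeastI_ex rtrancl_power)
  have "\<exists>u. (u, v) \<in> S \<and> d u < d v" if v: "v \<in> V - {r}" for v
  proof -
    obtain m where m: "d v = Suc m"
      using d[of v] v by (cases "d v") auto
    then obtain u where "(r, u) \<in> S ^^ m" "(u, v) \<in> S"
      using d[of v] v by auto
    moreover from this(1) have "d u \<le> m"
      unfolding d_def by (rule Least_le)
    ultimately show ?thesis using m by auto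
  qed
  then obtain p where p: "\<And>v. v \<in> V - {r} \<Longrightarrow> (p v, v) \<in> S \<and> d (p v) < d v"
    by metis
  define g where "g v = (if (v, p v) \<in> E then (v, p v) else (p v, v))" for v
  have "inj_on g (V - {r})"
  proof (rule inj_onI, rule ccontr)
    fix v w assume "v \<in> V - {r}" "w \<in> V - {r}" "g v = g w" "v \<noteq> w"
    then have "v = p w" "w = p v" "d (p v) < d v" "d (p w) < d w"
      using p by (auto simp: g_def split: if_splits)
    then show False by simp
  qed
  moreover have "g ` (V - {r}) \<subseteq> E"
    using p by (auto simp: g_def S_def)
  moreover have "finite E"
    using EV fin by (meson finite_SigmaI finite_subset)
  ultimately have "card (V - {r}) \<le> card E"
    by (rule card_inj_on_le)
  then show ?thesis using r fin by simp
qed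

lemma cycle_has_redundant_arc:
  assumes "finite R" "(x, x) \<in> R\<^sup>+"
  shows "\<exists>a b. (a, b) \<in> R \<and> (b, a) \<in> (R - {(a, b)})\<^sup>*"
  using assms
proof (induction R rule: finite_induct)
  case empty
  then show ?case by simp
next
  case (insert e R)
  obtain a b where e: "e = (a, b)" by (cases e)
  show ?case
  proof (cases "(x, x) \<in> R\<^sup>+")
    case True
    then obtain a' b' where ab: "(a', b') \<in> R" "(b', a') \<in> (R - {(a', b')})\<^sup>*"
      using insert.IH by blast
    have "R - {(a', b')} \<subseteq> insert e R - {(a', b')}" by auto
    then have "(b', a') \<in> (insert e R - {(a', b')})\<^sup>*" using ab(2) rtrancl_mono by blast
    then show ?thesis using ab(1) by blast
  next
    case False
    with insert.prems have "(x, a) \<in> R\<^sup>* \<and> (b, x) \<in> R\<^sup>*"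
      unfolding e trancl_insert by auto
    then have "(b, a) \<in> R\<^sup>*" by auto
    moreover have "insert e R - {(a, b)} = R" using insert.hyps e by auto
    ultimately have "(b, a) \<in> (insert e R - {(a, b)})\<^sup>*" by simp
    moreover have "(a, b) \<in> insert e R" using e by simp
    ultimately show ?thesis by blast
  qed
qed

text \<open>An arc on a cycle can be dropped without disconnecting the underlying graph, which would
  leave a connected graph with fewer than |V| - 1 arcs.\<close>

lemma directed_tree_acyclic:
  assumes "directed_tree V E"
  shows "acyclic E"
proof (rule acyclicI, intro allI notI)
  fix x assume cyc: "(x, x) \<in> E\<^sup>+"
  have fin: "finite V" and EV: "E \<subseteq> V \<times> V" and "V \<noteq> {}"
    and conn: "\<And>u w. u \<in> V \<Longrightarrow> w \<in> V \<Longrightarrow> (u, w) \<in> (E \<union> E\<inverse>)\<^sup>*"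
    and cardE: "card E = card V - 1"
    using assms unfolding directed_tree_def digraph_def by auto
  then obtain r where r: "r \<in> V" by auto
  have finE: "finite E" using EV fin by (meson finite_SigmaI finite_subset)
  obtain a b where ab: "(a, b) \<in> E" "(b, a) \<in> (E - {(a, b)})\<^sup>*"
    using cycle_has_redundant_arc[OF finE cyc] by blast
  define E' where "E' = E - {(a, b)}"
  have "(b, a) \<in> (E' \<union> E'\<inverse>)\<^sup>*"
    using ab(2) rtrancl_mono[of E' "E' \<union> E'\<inverse>"] unfolding E'_def by blast
  then have "(a, b) \<in> (E' \<union> E'\<inverse>)\<^sup>*"
    using rtrancl_converseI[of b a "E' \<union> E'\<inverse>"] by (simp add: converse_Un sup_commute)
  then have "E \<union> E\<inverse> \<subseteq> (E' \<union> E'\<inverse>)\<^sup>*"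
    using \<open>(b, a) \<in> (E' \<union> E'\<inverse>)\<^sup>*\<close> by (auto simp: E'_def)
  then have conn': "(r, w) \<in> (E' \<union> E'\<inverse>)\<^sup>*" if "w \<in> V" for w
    using rtrancl_mono[of "E \<union> E\<inverse>" "(E' \<union> E'\<inverse>)\<^sup>*"] conn[OF r that] by auto
  have "E' \<subseteq> V \<times> V" using EV by (auto simp: E'_def)
  then have "card V \<le> card E' + 1"
    using conn' by (rule connected_imp_card_le_Suc_card_arcs[OF fin r])
  moreover have "card E' = card E - 1" "card E \<ge> 1"
    using ab(1) finE by (auto simp: E'_def card_gt_0_iff Suc_le_eq)
  ultimately show False using cardE by simp
qed

section \<open>The class of digraphs with hanging trees\<close>

locale class_G =
  fixes V Vs :: "'a set" and E Es :: "('a \<times> 'a) set"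
    and T :: "'a \<Rightarrow> 'a set" and F :: "'a \<Rightarrow> ('a \<times> 'a) set"
  assumes in_class: "in_class_G V E Vs Es T F"
begin

abbreviation star_arcs :: "('a \<times> 'a) set" where
  "star_arcs \<equiv> star_replace Vs Es T"

definition descendants :: "'a set" where
  "descendants = {w. \<exists>c\<in>Vs. (c, w) \<in> (F c)\<^sup>+}"

lemma strong_core: "finite Vs" "Es \<subseteq> Vs \<times> Vs" "(v, v) \<notin> Es" "card Vs \<ge> 2"
  using in_class unfolding in_class_G_def strongly_connected_def digraph_def by auto

lemma hanging_tree:
  assumes "c \<in> Vs"
  shows "c \<in> T c" "finite (T c)" "F c \<subseteq> T c \<times> T c" "(v, v) \<notin> F c" "T c \<inter> Vs = {c}"
    and "acyclic (F c)"
proof -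
  have "directed_tree (T c) (F c)" using in_class assms unfolding in_class_G_def by blast
  then show "finite (T c)" "F c \<subseteq> T c \<times> T c" "(v, v) \<notin> F c"
    by (auto simp: directed_tree_def digraph_def)
  show "acyclic (F c)" using \<open>directed_tree (T c) (F c)\<close> by (rule directed_tree_acyclic)
  show "c \<in> T c" "T c \<inter> Vs = {c}" using in_class assms unfolding in_class_G_def by blast+
qed

lemma hanging_trees_disjoint: "c \<in> Vs \<Longrightarrow> d \<in> Vs \<Longrightarrow> u \<in> T c \<Longrightarrow> u \<in> T d \<Longrightarrow> c = d"
  using in_class unfolding in_class_G_def by blast

lemma V_eq: "V = (\<Union>c\<in>Vs. T c)" and E_eq: "E = Es \<union> (\<Union>c\<in>Vs. F c)"
  using in_class unfolding in_class_G_def by blast+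

lemma finite_V: "finite V"
  using V_eq strong_core(1) hanging_tree(2) by simp

lemma core_subset: "Vs \<subseteq> V"
  using V_eq hanging_tree(1) by blast

lemma V_nonempty: "V \<noteq> {}"
  using strong_core(4) core_subset by auto

lemma star_arcs_subset: "star_arcs \<subseteq> V \<times> V"
  using V_eq strong_core(2) core_subset by (auto simp: star_replace_def)

lemma loop_free: "(v, v) \<notin> E" and star_loop_free: "(v, v) \<notin> star_arcs"
  using E_eq strong_core(3) hanging_tree(4) by (auto simp: star_replace_def)

lemma arc_off_core:
  assumes "(w, u) \<in> E" "w \<notin> Vs"
  shows "\<exists>c\<in>Vs. (w, u) \<in> F c"
  using assms E_eq strong_core(2) by blast

lemma arc_from_core:
  assumes "c \<in> Vs" "(c, u) \<in> E"
  shows "u \<in> Vs \<Longrightarrow> (c, u) \<in> Es" and "u \<notin> Vs \<Longrightarrow> (c, u) \<in> F c"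
proof -
  have tree_arc: "c = d \<and> u \<in> T d \<and> u \<noteq> d" if "d \<in> Vs" "(c, u) \<in> F d" for d
    using hanging_tree(3,5)[OF that(1)] hanging_tree(4)[OF that(1), of c] that(2) assms(1) by fastforce
  show "u \<in> Vs \<Longrightarrow> (c, u) \<in> Es"
    using assms E_eq tree_arc hanging_tree(5) by blast
  show "u \<notin> Vs \<Longrightarrow> (c, u) \<in> F c"
    using assms E_eq strong_core(2) tree_arc by blast
qed

lemma outdeg_le_card:
  assumes "finite A" "{u. (v, u) \<in> R} \<subseteq> A"
  shows "outdeg R v \<le> card A"
  unfolding outdeg_def using assms by (rule card_mono)

lemma finite_star_successors: "finite {u. (v, u) \<in> star_arcs}"
  using star_arcs_subset finite_V by (auto intro: finite_subset)

lemma outdeg_core_le_star: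
  assumes "c \<in> Vs"
  shows "outdeg E c \<le> outdeg star_arcs c"
  unfolding outdeg_def
proof (rule card_mono[OF finite_star_successors])
  show "{u. (c, u) \<in> E} \<subseteq> {u. (c, u) \<in> star_arcs}"
    using arc_from_core[OF assms] hanging_tree(3,4)[OF assms] assms
    by (fastforce simp: star_replace_def)
qed

lemma outdeg_off_core_le_star:
  assumes "c \<in> Vs" "w \<in> T c" "w \<notin> Vs"
  shows "outdeg E w \<le> outdeg star_arcs c"
proof -
  have "{u. (w, u) \<in> E} \<subseteq> T c - {w}"
  proof
    fix u assume "u \<in> {u. (w, u) \<in> E}"
    then obtain d where "d \<in> Vs" "(w, u) \<in> F d"
      using arc_off_core assms(3) by blast
    moreover from this have "d = c"
      using hanging_tree(3)[of d] hanging_trees_disjoint[of d c w] assms(1,2) by blast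
    ultimately show "u \<in> T c - {w}" using hanging_tree(3,4) by blast
  qed
  then have "outdeg E w \<le> card (T c - {w})"
    using hanging_tree(2)[OF assms(1)] by (intro outdeg_le_card) auto
  also have "\<dots> = card (T c - {c})"
    using assms hanging_tree(1,2) by simp
  also have "\<dots> \<le> outdeg star_arcs c"
    unfolding outdeg_def using assms(1)
    by (intro card_mono[OF finite_star_successors]) (auto simp: star_replace_def)
  finally show ?thesis .
qed

lemma tree_arcs_trancl:
  assumes "(a, b) \<in> (\<Union>c\<in>Vs. F c)\<^sup>+"
  obtains c where "c \<in> Vs" "(a, b) \<in> (F c)\<^sup>+"
  using assms
proof (induction arbitrary: thesis rule: trancl_induct)
  case (step y z)
  obtain c where c: "c \<in> Vs" "(a, y) \<in> (F c)\<^sup>+" using step.IH by blast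
  obtain d where d: "d \<in> Vs" "(y, z) \<in> F d" using step.hyps(2) by blast
  have "y \<in> T c" "y \<in> T d"
    using trancl_subset_Sigma[OF hanging_tree(3)[OF c(1)]] c(2) hanging_tree(3)[OF d(1)] d(2) by blast+
  then have "d = c" using hanging_trees_disjoint c(1) d(1) by blast
  then show ?case using step.prems c d by (meson trancl.trancl_into_trancl)
qed blast

lemma acyclic_tree_arcs: "acyclic (\<Union>c\<in>Vs. F c)"
  using hanging_tree(6) tree_arcs_trancl unfolding acyclic_def by metis

lemma descendants_off_core: "descendants \<subseteq> V - Vs"
proof
  fix w assume "w \<in> descendants"
  then obtain c where c: "c \<in> Vs" "(c, w) \<in> (F c)\<^sup>+" by (auto simp: descendants_def)
  then have "w \<in> T c" "w \<noteq> c"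
    using trancl_subset_Sigma[OF hanging_tree(3)[OF c(1)]] hanging_tree(6)[OF c(1)] by (auto simp: acyclic_def)
  then show "w \<in> V - Vs" using c(1) hanging_tree(5)[OF c(1)] V_eq by blast
qed

lemma arc_from_core_into_descendants:
  assumes "(c, u) \<in> E" "c \<in> Vs" "u \<notin> Vs"
  shows "u \<in> descendants"
  using arc_from_core(2) assms by (auto simp: descendants_def)

lemma arc_from_descendant:
  assumes "(w, u) \<in> E" "w \<in> descendants"
  shows "u \<in> descendants"
proof -
  from assms(2) obtain c where c: "c \<in> Vs" "(c, w) \<in> (F c)\<^sup>+" by (auto simp: descendants_def)
  obtain d where d: "d \<in> Vs" "(w, u) \<in> F d"
    using arc_off_core assms descendants_off_core by blast
  have "w \<in> T c" "w \<in> T d"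
    using trancl_subset_Sigma[OF hanging_tree(3)[OF c(1)]] c(2) hanging_tree(3)[OF d(1)] d(2) by blast+
  then have "d = c" using hanging_trees_disjoint c(1) d(1) by blast
  then show ?thesis
    using c d trancl_into_trancl[of c w "F c" u] by (auto simp: descendants_def)
qed

lemma support_off_core_acyclic:
  assumes "\<alpha> < 1" "S \<subseteq> V - Vs"
  shows "acyclic {(w, u). w \<in> S \<and> u \<in> S \<and> w \<noteq> u \<and> A_alpha \<alpha> E w u \<noteq> 0}"
proof (rule acyclic_subset[OF acyclic_tree_arcs])
  show "{(w, u). w \<in> S \<and> u \<in> S \<and> w \<noteq> u \<and> A_alpha \<alpha> E w u \<noteq> 0} \<subseteq> (\<Union>c\<in>Vs. F c)"
    using assms arc_off_core by (auto simp: A_alpha_offdiag split: if_splits)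
qed

context
  fixes \<alpha> :: real and \<mu> :: complex and x :: "'a \<Rightarrow> complex"
  assumes \<alpha>: "0 \<le> \<alpha>" "\<alpha> < 1"
    and eig: "\<And>v. v \<in> V \<Longrightarrow> (\<Sum>w\<in>V. complex_of_real (A_alpha \<alpha> E v w) * x w) = \<mu> * x v"
    and off_core_diag: "\<And>w. w \<in> V - Vs \<Longrightarrow> \<mu> \<noteq> complex_of_real (\<alpha> * real (outdeg E w))"
begin

lemma eigenvector_vanishes_on_descendants: "\<forall>w\<in>descendants. x w = 0"
proof (rule eigenvector_vanishes_on_acyclic_part[OF finite_V eig])
  show "descendants \<subseteq> V" using descendants_off_core by blast
  show "acyclic {(w, u). w \<in> descendants \<and> u \<in> descendants \<and> w \<noteq> u \<and> A_alpha \<alpha> E w u \<noteq> 0}"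
    using support_off_core_acyclic[OF \<alpha>(2) descendants_off_core] .
  show "x u = 0" if "w \<in> descendants" "u \<in> V - descendants" "A_alpha \<alpha> E w u \<noteq> 0" for w u
    using that arc_from_descendant by (cases "w = u") (auto simp: A_alpha_offdiag split: if_splits)
  show "\<mu> \<noteq> complex_of_real (A_alpha \<alpha> E w w)" if "w \<in> descendants" for w
    using off_core_diag that descendants_off_core by (auto simp: A_alpha_diag loop_free)
qed

lemma eigenvector_nonzero_on_core:
  assumes "\<exists>v\<in>V. x v \<noteq> 0"
  shows "\<exists>c\<in>Vs. x c \<noteq> 0"
proof (rule ccontr)
  assume "\<not> (\<exists>c\<in>Vs. x c \<noteq> 0)"
  then have "\<forall>w\<in>V - Vs. x w = 0"
    using support_off_core_acyclic[OF \<alpha>(2), of "V - Vs"] off_core_diag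
    by (intro eigenvector_vanishes_on_acyclic_part[OF finite_V eig]) (auto simp: A_alpha_diag loop_free)
  with assms \<open>\<not> (\<exists>c\<in>Vs. x c \<noteq> 0)\<close> show False by blast
qed

text \<open>On the core, |x| is subinvariant for the star matrix: arcs leaving the core end in
  descendants, where x vanishes, and the star arcs dominate the remaining arcs and outdegrees.\<close>

lemma core_subinvariant:
  assumes "v \<in> Vs"
  shows "cmod \<mu> * cmod (x v)
    \<le> (\<Sum>w\<in>V. A_alpha \<alpha> star_arcs v w * (if w \<in> Vs then cmod (x w) else 0))"
proof -
  have "cmod \<mu> * cmod (x v) = cmod (\<Sum>w\<in>V. complex_of_real (A_alpha \<alpha> E v w) * x w)"
    using eig[of v] assms core_subset by (auto simp: norm_mult)
  also have "\<dots> \<le> (\<Sum>w\<in>V. cmod (complex_of_real (A_alpha \<alpha> E v w) * x w))"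
    by (rule norm_sum)
  also have "\<dots> = (\<Sum>w\<in>V. A_alpha \<alpha> E v w * cmod (x w))"
    using \<alpha> by (simp add: norm_mult A_alpha_nonneg)
  also have "\<dots> = (\<Sum>w\<in>V. A_alpha \<alpha> E v w * (if w \<in> Vs then cmod (x w) else 0))"
  proof (rule sum.cong)
    fix w assume "w \<in> V"
    have "x w = 0" if "w \<notin> Vs" "A_alpha \<alpha> E v w \<noteq> 0"
      using that assms eigenvector_vanishes_on_descendants arc_from_core_into_descendants
      by (cases "v = w") (auto simp: A_alpha_offdiag split: if_splits)
    then show "A_alpha \<alpha> E v w * cmod (x w) = A_alpha \<alpha> E v w * (if w \<in> Vs then cmod (x w) else 0)"
      by auto
  qed simp
  also have "\<dots> \<le> (\<Sum>w\<in>V. A_alpha \<alpha> star_arcs v w * (if w \<in> Vs then cmod (x w) else 0))"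
  proof (rule sum_mono)
    fix w
    show "A_alpha \<alpha> E v w * (if w \<in> Vs then cmod (x w) else 0)
      \<le> A_alpha \<alpha> star_arcs v w * (if w \<in> Vs then cmod (x w) else 0)"
    proof (cases "w \<in> Vs")
      case True
      have "A_alpha \<alpha> E v w \<le> A_alpha \<alpha> star_arcs v w"
        using \<alpha> outdeg_core_le_star[OF assms] arc_from_core(1)[OF assms _ True]
        by (intro A_alpha_mono) (auto simp: star_replace_def)
      then show ?thesis using True by (simp add: mult_right_mono)
    qed simp
  qed
  finally show ?thesis .
qed

end

lemma eigenvalue_le_rho_star:
  assumes \<alpha>: "0 \<le> \<alpha>" "\<alpha> < 1" and "is_eigenvalue V (A_alpha \<alpha> E) \<mu>"
    and off_core_diag: "\<And>w. w \<in> V - Vs \<Longrightarrow> \<mu> \<noteq> complex_of_real (\<alpha> * real (outdeg E w))"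
  shows "cmod \<mu> \<le> rho_alpha \<alpha> V star_arcs"
proof -
  obtain x where nonzero: "\<exists>v\<in>V. x v \<noteq> 0"
    and eig: "\<And>v. v \<in> V \<Longrightarrow> (\<Sum>w\<in>V. complex_of_real (A_alpha \<alpha> E v w) * x w) = \<mu> * x v"
    using assms(3) unfolding is_eigenvalue_def by blast
  obtain c where c: "c \<in> Vs" "x c \<noteq> 0"
    using eigenvector_nonzero_on_core[OF \<alpha> eig off_core_diag nonzero] by blast
  show ?thesis unfolding rho_alpha_def
  proof (rule spectral_radius_ge_subinvariant[OF finite_V, where z = "\<lambda>w. if w \<in> Vs then cmod (x w) else 0"])
    show "c \<in> V" using c core_subset by blast
    fix v assume "v \<in> V"
    show "cmod \<mu> * (if v \<in> Vs then cmod (x v) else 0)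
      \<le> (\<Sum>w\<in>V. A_alpha \<alpha> star_arcs v w * (if w \<in> Vs then cmod (x w) else 0))"
      using core_subinvariant[OF \<alpha> eig off_core_diag, of v] \<alpha>
      by (auto intro!: sum_nonneg simp: A_alpha_nonneg)
  qed (use c \<alpha> in \<open>auto simp: A_alpha_nonneg\<close>)
qed

lemma rho_alpha_le_star:
  assumes "0 \<le> \<alpha>" "\<alpha> < 1"
  shows "rho_alpha \<alpha> V E \<le> rho_alpha \<alpha> V star_arcs"
proof -
  obtain \<mu> where \<mu>: "is_eigenvalue V (A_alpha \<alpha> E) \<mu>" "rho_alpha \<alpha> V E = cmod \<mu>"
    using spectral_radius_attained[OF finite_V V_nonempty] unfolding rho_alpha_def by metis
  show ?thesis
  proof (cases "\<exists>c\<in>Vs. cmod \<mu> \<le> \<alpha> * real (outdeg star_arcs c)")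
    case True
    then obtain c where c: "c \<in> Vs" "cmod \<mu> \<le> \<alpha> * real (outdeg star_arcs c)" by blast
    have "\<alpha> * real (outdeg star_arcs c) = A_alpha \<alpha> star_arcs c c"
      by (simp add: A_alpha_diag star_loop_free)
    also have "\<dots> \<le> rho_alpha \<alpha> V star_arcs"
      unfolding rho_alpha_def using c(1) core_subset assms
      by (intro diagonal_le_spectral_radius[OF finite_V]) (auto simp: A_alpha_nonneg)
    finally show ?thesis using \<mu>(2) c(2) by simp
  next
    case False
    have "\<mu> \<noteq> complex_of_real (\<alpha> * real (outdeg E w))" if w: "w \<in> V - Vs" for w
    proof
      obtain c where c: "c \<in> Vs" "w \<in> T c" using w V_eq by blast
      have "\<alpha> * real (outdeg E w) \<le> \<alpha> * real (outdeg star_arcs c)"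
        using outdeg_off_core_le_star[OF c] w assms(1) by (simp add: mult_left_mono)
      moreover assume "\<mu> = complex_of_real (\<alpha> * real (outdeg E w))"
      then have "cmod \<mu> = \<bar>\<alpha> * real (outdeg E w)\<bar>" by (simp only: norm_of_real)
      ultimately show False using False c(1) assms(1) by auto
    qed
    then show ?thesis using eigenvalue_le_rho_star[OF assms \<mu>(1)] \<mu>(2) by simp
  qed
qed

end

theorem theorem2p7:
  fixes \<alpha> :: real
    and V Vs :: "'a set" and E Es :: "('a \<times> 'a) set"
    and T :: "'a \<Rightarrow> 'a set" and F :: "'a \<Rightarrow> ('a \<times> 'a) set"
  assumes "0 \<le> \<alpha>" "\<alpha> < 1"
    and "in_class_G V E Vs Es T F"
  shows "rho_alpha \<alpha> V (star_replace Vs Es T) \<ge> rho_alpha \<alpha> V E"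
proof -
  interpret class_G V Vs E Es T F
    using assms(3) by (rule class_G.intro)
  show ?thesis using rho_alpha_le_star[OF assms(1,2)] by simp
qed

end
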